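(* Let $(X_t)_{t\ge1}$ be i.i.d. random variables in $[0,1]$ with variance $\sigma^2>0$, fix $\alpha\in(0,1)$, and define $\widehat\mu_t$, $\widehat\sigma_t^2$ and $\lambda_t$ as follows: $\widehat\mu_0=1/2$ and $\widehat\sigma_0^2=1/4$, and for $t\ge1$, $\widehat\mu_t=(1/2+\sum_{i\le t}X_i)/(t+1)$, $\widehat\sigma_t^2=(1/4+\sum_{i\le t}(X_i-\widehat\mu_i)^2)/(t+1)$ and $\lambda_t=\sqrt{2\log(2/\alpha)/(\widehat\sigma_{t-1}^2\,t\log(1+t))}\wedge\frac12$. Then, almost surely, \[ \sum_{i=1}^t\lambda_i\sim2\sqrt{\frac{2\log(2/\alpha)}{\sigma^2}}\sqrt{\frac{t}{\log t}}. \]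
   Context: $f(t)\sim g(t)$ means $f(t)/g(t)\to1$ as $t\to\infty$. *)

theory Defs
  imports "HOL-Probability.Probability"
begin

definition mu_hat :: "(nat \<Rightarrow> 'a \<Rightarrow> real) \<Rightarrow> nat \<Rightarrow> 'a \<Rightarrow> real" where
  "mu_hat X t \<omega> = (if t = 0 then 1/2
     else (1/2 + (\<Sum>i=1..t. X i \<omega>)) / (real t + 1))"

definition sigma2_hat :: "(nat \<Rightarrow> 'a \<Rightarrow> real) \<Rightarrow> nat \<Rightarrow> 'a \<Rightarrow> real" where
  "sigma2_hat X t \<omega> = (if t = 0 then 1/4
     else (1/4 + (\<Sum>i=1..t. (X i \<omega> - mu_hat X i \<omega>)\<^sup>2)) / (real t + 1))"

text \<open>lambda_t, meaningful for t >= 1.\<close>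
definition lam :: "real \<Rightarrow> (nat \<Rightarrow> 'a \<Rightarrow> real) \<Rightarrow> nat \<Rightarrow> 'a \<Rightarrow> real" where
  "lam \<alpha> X t \<omega> = min (sqrt (2 * ln (2 / \<alpha>) /
       (sigma2_hat X (t - 1) \<omega> * real t * ln (1 + real t)))) (1/2)"

end

theory Submission
  imports Defs "HOL-Real_Asymp.Real_Asymp"
begin

text \<open>
  Hoeffding's inequality and Borel--Cantelli give the strong law of large numbers for the
  bounded i.i.d. sequences \<open>X\<^sub>i\<close> and \<open>(X\<^sub>i - \<mu>)\<^sup>2\<close>. Since the running means
  \<open>\<mu>\<^sub>t\<close> converge to \<open>\<mu>\<close>, the squares \<open>(X\<^sub>i - \<mu>\<^sub>i)\<^sup>2\<close> differ from \<open>(X\<^sub>i - \<mu>)\<^sup>2\<close> by a null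
  sequence, so \<open>\<sigma>\<^sub>t\<^sup>2 \<longrightarrow> \<sigma>\<^sup>2\<close> almost surely. Then the cap \<open>1/2\<close> in \<open>\<lambda>\<^sub>t\<close> is eventually
  inactive and \<open>\<lambda>\<^sub>t \<surd>(t log t) \<longrightarrow> \<surd>(2 log(2/\<alpha>)/\<sigma>\<^sup>2)\<close>, which is asymptotically the
  increment of \<open>2 \<surd>(2 log(2/\<alpha>)/\<sigma>\<^sup>2) \<surd>(t / log t)\<close>; the Stolz--Cesaro theorem
  transfers this from increments to partial sums.
\<close>

lemma sum_increments_deviation_le:
  fixes A G :: "nat \<Rightarrow> real"
  assumes "\<And>k. k \<ge> N \<Longrightarrow> \<bar>(A (Suc k) - A k) - L * (G (Suc k) - G k)\<bar> \<le> e * (G (Suc k) - G k)"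
    and "N \<le> n"
  shows "\<bar>A n - A N - L * (G n - G N)\<bar> \<le> e * (G n - G N)"
proof -
  have "(\<Sum>k=N..<n. (A (Suc k) - A k) - L * (G (Suc k) - G k))
      = (\<Sum>k=N..<n. A (Suc k) - A k) - L * (\<Sum>k=N..<n. G (Suc k) - G k)"
    by (simp only: sum_subtractf[of "\<lambda>k. A (Suc k) - A k"] sum_distrib_left)
  then have "\<bar>A n - A N - L * (G n - G N)\<bar>
      = \<bar>\<Sum>k=N..<n. (A (Suc k) - A k) - L * (G (Suc k) - G k)\<bar>"
    by (simp add: sum_Suc_diff'[OF \<open>N \<le> n\<close>])
  also have "\<dots> \<le> (\<Sum>k=N..<n. e * (G (Suc k) - G k))"
    by (rule order_trans[OF sum_abs sum_mono]) (simp add: assms(1))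
  also have "\<dots> = e * (G n - G N)"
    by (simp add: sum_distrib_left[symmetric] sum_Suc_diff'[OF \<open>N \<le> n\<close>])
  finally show ?thesis .
qed

lemma Stolz_Cesaro:
  fixes A G :: "nat \<Rightarrow> real"
  assumes lim: "(\<lambda>n. (A (Suc n) - A n) / (G (Suc n) - G n)) \<longlonglongrightarrow> L"
    and inc: "eventually (\<lambda>n. G n < G (Suc n)) sequentially"
    and G: "filterlim G at_top sequentially"
  shows "(\<lambda>n. A n / G n) \<longlonglongrightarrow> L"
proof (rule tendstoI)
  fix r :: real
  assume "r > 0"
  define e where "e = r / 2"
  have "e > 0" using \<open>r > 0\<close> by (simp add: e_def)
  obtain N where N: "\<And>n. n \<ge> N \<Longrightarrow>
      G n < G (Suc n) \<and> \<bar>(A (Suc n) - A n) / (G (Suc n) - G n) - L\<bar> < e"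
    using eventually_conj[OF inc tendstoD[OF lim \<open>e > 0\<close>]]
    by (auto simp: eventually_sequentially dist_real_def)
  have step: "\<bar>(A (Suc k) - A k) - L * (G (Suc k) - G k)\<bar> \<le> e * (G (Suc k) - G k)"
    if "k \<ge> N" for k
  proof -
    define d where "d = G (Suc k) - G k"
    have "d > 0" using N[OF that] by (simp add: d_def)
    have "(A (Suc k) - A k) - L * d = ((A (Suc k) - A k) / d - L) * d"
      using \<open>d > 0\<close> by (simp add: field_simps)
    then have "\<bar>(A (Suc k) - A k) - L * d\<bar> = \<bar>(A (Suc k) - A k) / d - L\<bar> * d"
      using \<open>d > 0\<close> by (simp add: abs_mult)
    also have "\<dots> \<le> e * d"
      using N[OF that] \<open>d > 0\<close> by (simp add: d_def)
    finally show ?thesis by (simp add: d_def)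
  qed
  define C where "C = \<bar>A N - L * G N\<bar> + e * \<bar>G N\<bar>"
  have bound: "\<bar>A n - L * G n\<bar> \<le> e * G n + C" if "n \<ge> N" for n
  proof -
    have "\<bar>A n - A N - L * (G n - G N)\<bar> \<le> e * G n - e * G N"
      using sum_increments_deviation_le[of N A L G e, OF step that] by (simp add: right_diff_distrib)
    moreover have "- (e * G N) \<le> e * \<bar>G N\<bar>"
      using \<open>e > 0\<close> abs_ge_minus_self[of "e * G N"] by (simp add: abs_mult)
    moreover have "\<bar>A n - L * G n\<bar> \<le> \<bar>A n - A N - L * (G n - G N)\<bar> + \<bar>A N - L * G N\<bar>"
      using abs_triangle_ineq[of "A n - A N - L * (G n - G N)" "A N - L * G N"]
      by (simp add: algebra_simps)
    ultimately show ?thesis by (simp add: C_def)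
  qed
  have "(\<lambda>n. C / G n) \<longlonglongrightarrow> 0"
    by (rule tendsto_divide_0[OF tendsto_const filterlim_at_top_imp_at_infinity[OF G]])
  then have "eventually (\<lambda>n. C / G n < e) sequentially"
    using \<open>e > 0\<close> by (rule order_tendstoD)
  moreover have "eventually (\<lambda>n. G n > 0) sequentially"
    using G by (simp add: filterlim_at_top_dense)
  moreover have "eventually (\<lambda>n. n \<ge> N) sequentially"
    by (rule eventually_ge_at_top)
  ultimately show "eventually (\<lambda>n. dist (A n / G n) L < r) sequentially"
  proof eventually_elim
    case (elim n)
    have "\<bar>A n / G n - L\<bar> = \<bar>A n - L * G n\<bar> / G n"
      using elim by (simp add: field_simps)
    also have "\<dots> \<le> (e * G n + C) / G n"
      using elim bound by (intro divide_right_mono) auto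
    also have "\<dots> = e + C / G n"
      using elim by (simp add: field_simps)
    also have "\<dots> < r"
      using elim unfolding e_def by linarith
    finally show ?case by (simp add: dist_real_def)
  qed
qed

lemma tendsto_Cesaro_mean:
  fixes e :: "nat \<Rightarrow> real"
  assumes "e \<longlonglongrightarrow> L"
  shows "(\<lambda>n. (\<Sum>i=1..n. e i) / real n) \<longlonglongrightarrow> L"
  by (rule Stolz_Cesaro) (use LIMSEQ_Suc[OF assms] filterlim_real_sequentially in simp_all)

lemma AE_tendsto_of_AE_eventually_dist:
  fixes f :: "'i \<Rightarrow> 'a \<Rightarrow> 'b::metric_space"
  assumes "\<And>\<epsilon>. \<epsilon> > 0 \<Longrightarrow> AE x in M. eventually (\<lambda>n. dist (f n x) l < \<epsilon>) F"
  shows "AE x in M. ((\<lambda>n. f n x) \<longlongrightarrow> l) F"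
proof -
  have "AE x in M. \<forall>k::nat. eventually (\<lambda>n. dist (f n x) l < inverse (Suc k)) F"
    unfolding AE_all_countable by (intro allI assms) simp
  then show ?thesis
  proof (rule AE_mp, intro AE_I2 impI tendstoI)
    fix x and \<epsilon> :: real
    assume close: "\<forall>k::nat. eventually (\<lambda>n. dist (f n x) l < inverse (Suc k)) F"
      and "\<epsilon> > 0"
    then obtain k where "inverse (real (Suc k)) < \<epsilon>"
      using reals_Archimedean by blast
    with close[rule_format, of k] show "eventually (\<lambda>n. dist (f n x) l < \<epsilon>) F"
      by (auto elim: eventually_mono)
  qed
qed

lemma (in prob_space) AE_eventually_sample_mean_close:
  fixes Y :: "nat \<Rightarrow> 'a \<Rightarrow> real"
  assumes meas: "\<And>i. i \<ge> 1 \<Longrightarrow> Y i \<in> borel_measurable M"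
    and indep: "indep_vars (\<lambda>_. borel) Y {1..}"
    and distr: "\<And>i. i \<ge> 1 \<Longrightarrow> distr M borel (Y i) = distr M borel (Y 1)"
    and bounded: "\<And>i \<omega>. i \<ge> 1 \<Longrightarrow> \<omega> \<in> space M \<Longrightarrow> Y i \<omega> \<in> {a..b}"
    and "a < b" and "\<epsilon> > 0"
  shows "AE \<omega> in M. eventually
    (\<lambda>n. \<bar>(\<Sum>i=1..n. Y i \<omega>) / real n - expectation (Y 1)\<bar> < \<epsilon>) sequentially"
proof -
  define \<mu> where "\<mu> = expectation (Y 1)"
  define q where "q = exp (- 2 * \<epsilon>\<^sup>2 / (b - a)\<^sup>2)"
  define D where "D n = {\<omega> \<in> space M. \<bar>(\<Sum>i=1..Suc n. Y i \<omega>) / real (Suc n) - \<mu>\<bar> \<ge> \<epsilon>}" for n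
  have D_sets: "D n \<in> sets M" for n
  proof -
    have "(\<lambda>\<omega>. \<bar>(\<Sum>i=1..Suc n. Y i \<omega>) / real (Suc n) - \<mu>\<bar>) \<in> borel_measurable M"
      using meas by (intro borel_measurable_abs borel_measurable_diff borel_measurable_divide
          borel_measurable_sum) auto
    then show ?thesis
      unfolding D_def by measurable
  qed
  have D_Hoeffding: "prob (D n) \<le> 2 * q ^ Suc n" for n
  proof -
    have "iid_interval_bounded_random_variables M {1..Suc n} Y (Y 1) a b"
    proof (intro iid_interval_bounded_random_variables.intro prob_space_axioms
        iid_interval_bounded_random_variables_axioms.intro)
      show "indep_vars (\<lambda>_. borel) Y {1..Suc n}"
        by (rule indep_vars_subset[OF indep]) auto
      show "distr M borel (Y i) = distr M borel (Y 1)" if "i \<in> {1..Suc n}" for i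
        using that by (intro distr) auto
      show "AE \<omega> in M. Y 1 \<omega> \<in> {a..b}"
        using bounded by (intro AE_I2) auto
    qed (use meas in auto)
    then interpret Hoeffding_ineq_iid M "{1..Suc n}" Y "Y 1" a b \<mu>
      unfolding Hoeffding_ineq_iid_def \<mu>_def .
    have "prob (D n) \<le> 2 * exp (- 2 * real (Suc n) * \<epsilon>\<^sup>2 / (b - a)\<^sup>2)"
      using Hoeffding_ineq_abs_ge'[of \<epsilon>] \<open>a < b\<close> \<open>\<epsilon> > 0\<close> by (simp add: D_def)
    also have "\<dots> = 2 * exp (real (Suc n) * (- 2 * \<epsilon>\<^sup>2 / (b - a)\<^sup>2))"
      using \<open>a < b\<close> by (simp add: field_simps)
    also have "\<dots> = 2 * q ^ Suc n"
      unfolding q_def by (simp only: exp_of_nat_mult)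
    finally show ?thesis .
  qed
  have "summable (\<lambda>n. 2 * q * q ^ n)"
    using \<open>a < b\<close> \<open>\<epsilon> > 0\<close> by (intro summable_mult summable_geometric) (simp add: q_def)
  then have "summable (\<lambda>n. measure M (D n))"
    by (rule summable_comparison_test') (use D_Hoeffding in \<open>simp add: mult.assoc\<close>)
  then have "AE \<omega> in M. eventually (\<lambda>n. \<omega> \<in> space M - D n) sequentially"
    by (intro borel_cantelli_AE1 D_sets) (simp_all add: less_top[symmetric])
  then show ?thesis
  proof (rule AE_mp, intro AE_I2 impI)
    fix \<omega>
    assume "eventually (\<lambda>n. \<omega> \<in> space M - D n) sequentially"
    then have "eventually (\<lambda>n. \<bar>(\<Sum>i=1..Suc n. Y i \<omega>) / real (Suc n) - \<mu>\<bar> < \<epsilon>) sequentially"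
      by (rule eventually_mono) (auto simp: D_def)
    then show "eventually (\<lambda>n. \<bar>(\<Sum>i=1..n. Y i \<omega>) / real n - expectation (Y 1)\<bar> < \<epsilon>) sequentially"
      unfolding \<mu>_def by (subst eventually_sequentially_Suc[symmetric])
  qed
qed

theorem (in prob_space) strong_law_of_large_numbers_bounded_iid:
  fixes Y :: "nat \<Rightarrow> 'a \<Rightarrow> real"
  assumes "\<And>i. i \<ge> 1 \<Longrightarrow> Y i \<in> borel_measurable M"
    and "indep_vars (\<lambda>_. borel) Y {1..}"
    and "\<And>i. i \<ge> 1 \<Longrightarrow> distr M borel (Y i) = distr M borel (Y 1)"
    and "\<And>i \<omega>. i \<ge> 1 \<Longrightarrow> \<omega> \<in> space M \<Longrightarrow> Y i \<omega> \<in> {a..b}"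
    and "a < b"
  shows "AE \<omega> in M. (\<lambda>n. (\<Sum>i=1..n. Y i \<omega>) / real n) \<longlonglongrightarrow> expectation (Y 1)"
  using AE_eventually_sample_mean_close[OF assms]
  by (intro AE_tendsto_of_AE_eventually_dist) (simp add: dist_real_def)

lemma distr_compose_eq:
  assumes "X \<in> measurable M N" "Y \<in> measurable M N" "f \<in> measurable N K"
    and "distr M N X = distr M N Y"
  shows "distr M K (\<lambda>\<omega>. f (X \<omega>)) = distr M K (\<lambda>\<omega>. f (Y \<omega>))"
  using distr_distr[OF assms(3,1)] distr_distr[OF assms(3,2)] assms(4)
  by (simp add: comp_def)

corollary (in prob_space) strong_law_of_large_numbers_bounded_iid_transform:
  fixes Y :: "nat \<Rightarrow> 'a \<Rightarrow> real" and f :: "real \<Rightarrow> real"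
  assumes meas: "\<And>i. i \<ge> 1 \<Longrightarrow> Y i \<in> borel_measurable M"
    and indep: "indep_vars (\<lambda>_. borel) Y {1..}"
    and distr: "\<And>i. i \<ge> 1 \<Longrightarrow> distr M borel (Y i) = distr M borel (Y 1)"
    and f: "f \<in> borel_measurable borel"
    and bounded: "\<And>i \<omega>. i \<ge> 1 \<Longrightarrow> \<omega> \<in> space M \<Longrightarrow> f (Y i \<omega>) \<in> {a..b}"
    and "a < b"
  shows "AE \<omega> in M. (\<lambda>n. (\<Sum>i=1..n. f (Y i \<omega>)) / real n) \<longlonglongrightarrow> expectation (\<lambda>\<omega>. f (Y 1 \<omega>))"
proof (rule strong_law_of_large_numbers_bounded_iid[OF _ _ _ bounded \<open>a < b\<close>])
  show "(\<lambda>\<omega>. f (Y i \<omega>)) \<in> borel_measurable M" if "i \<ge> 1" for i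
    using measurable_compose[OF meas[OF that] f] .
  show "indep_vars (\<lambda>_. borel) (\<lambda>i \<omega>. f (Y i \<omega>)) {1..}"
    using indep_vars_compose2[OF indep f] .
  show "distr M borel (\<lambda>\<omega>. f (Y i \<omega>)) = distr M borel (\<lambda>\<omega>. f (Y 1 \<omega>))" if "i \<ge> 1" for i
    by (rule distr_compose_eq[OF meas[OF that] meas[of 1] f distr[OF that]]) simp
qed

lemma (in prob_space) expectation_in_interval:
  fixes Y :: "'a \<Rightarrow> real"
  assumes "Y \<in> borel_measurable M" "\<And>\<omega>. \<omega> \<in> space M \<Longrightarrow> Y \<omega> \<in> {a..b}"
  shows "expectation Y \<in> {a..b}"
proof -
  interpret interval_bounded_random_variable M Y a b
    by unfold_locales (use assms in \<open>auto intro!: AE_I2\<close>)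
  have "expectation (\<lambda>_. a) \<le> expectation Y" "expectation Y \<le> expectation (\<lambda>_. b)"
    using assms(2) by (intro integral_mono integrable; simp)+
  then show ?thesis by (simp add: prob_space)
qed

lemma tendsto_regularized_mean:
  fixes S :: "nat \<Rightarrow> real"
  assumes "(\<lambda>t. S t / real t) \<longlonglongrightarrow> L"
  shows "(\<lambda>t. (c + S t) / (real t + 1)) \<longlonglongrightarrow> L"
proof -
  have "(\<lambda>t. c / (real t + 1) + S t / real t * (real t / (real t + 1))) \<longlonglongrightarrow> 0 + L * 1"
    by (intro tendsto_add tendsto_mult assms) real_asymp+
  moreover have "eventually (\<lambda>t. c / (real t + 1) + S t / real t * (real t / (real t + 1))
      = (c + S t) / (real t + 1)) sequentially"
    using eventually_gt_at_top[of 0] by eventually_elim (simp add: add_divide_distrib)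
  ultimately show ?thesis
    by (simp add: tendsto_cong)
qed

lemma mu_hat_in_unit_interval:
  assumes "\<And>i. i \<ge> 1 \<Longrightarrow> X i \<omega> \<in> {0..1}"
  shows "mu_hat X t \<omega> \<in> {0..1}"
proof -
  have "0 \<le> (\<Sum>i=1..t. X i \<omega>)"
    using assms by (intro sum_nonneg) auto
  moreover have "(\<Sum>i=1..t. X i \<omega>) \<le> (\<Sum>i=1..t. 1)"
    using assms by (intro sum_mono) auto
  ultimately show ?thesis by (simp add: mu_hat_def field_simps)
qed

lemma mu_hat_tendsto:
  assumes "(\<lambda>n. (\<Sum>i=1..n. X i \<omega>) / real n) \<longlonglongrightarrow> \<mu>"
  shows "(\<lambda>t. mu_hat X t \<omega>) \<longlonglongrightarrow> \<mu>"
proof (rule Lim_transform_eventually[OF tendsto_regularized_mean[OF assms]])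
  show "eventually (\<lambda>t. (1/2 + (\<Sum>i=1..t. X i \<omega>)) / (real t + 1) = mu_hat X t \<omega>) sequentially"
    using eventually_gt_at_top[of 0] by eventually_elim (simp add: mu_hat_def)
qed

lemma sigma2_hat_tendsto:
  assumes X: "\<And>i. i \<ge> 1 \<Longrightarrow> X i \<omega> \<in> {0..1}" and \<mu>: "\<mu> \<in> {0..1}"
    and mean: "(\<lambda>n. (\<Sum>i=1..n. X i \<omega>) / real n) \<longlonglongrightarrow> \<mu>"
    and var: "(\<lambda>n. (\<Sum>i=1..n. (X i \<omega> - \<mu>)\<^sup>2) / real n) \<longlonglongrightarrow> s"
  shows "(\<lambda>t. sigma2_hat X t \<omega>) \<longlonglongrightarrow> s"
proof -
  define e where "e i = (X i \<omega> - mu_hat X i \<omega>)\<^sup>2 - (X i \<omega> - \<mu>)\<^sup>2" for i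
  have "e \<longlonglongrightarrow> 0"
  proof (rule Lim_null_comparison)
    show "eventually (\<lambda>i. norm (e i) \<le> 2 * \<bar>mu_hat X i \<omega> - \<mu>\<bar>) sequentially"
      using eventually_ge_at_top[of 1]
    proof eventually_elim
      case (elim i)
      have "e i = (\<mu> - mu_hat X i \<omega>) * (2 * X i \<omega> - mu_hat X i \<omega> - \<mu>)"
        by (simp add: e_def power2_eq_square algebra_simps)
      then have "norm (e i) = \<bar>mu_hat X i \<omega> - \<mu>\<bar> * \<bar>2 * X i \<omega> - mu_hat X i \<omega> - \<mu>\<bar>"
        by (metis abs_minus_commute abs_mult real_norm_def)
      also have "\<dots> \<le> \<bar>mu_hat X i \<omega> - \<mu>\<bar> * 2"
        using X[OF elim] mu_hat_in_unit_interval[of X \<omega> i] X \<mu>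
        by (intro mult_left_mono) auto
      finally show ?case by simp
    qed
    show "(\<lambda>i. 2 * \<bar>mu_hat X i \<omega> - \<mu>\<bar>) \<longlonglongrightarrow> 0"
      using mu_hat_tendsto[of X \<omega> \<mu>, OF mean]
      by (intro tendsto_mult_right_zero tendsto_rabs_zero LIM_zero)
  qed
  then have "(\<lambda>n. (\<Sum>i=1..n. (X i \<omega> - \<mu>)\<^sup>2) / real n + (\<Sum>i=1..n. e i) / real n)
      \<longlonglongrightarrow> s + 0"
    by (intro tendsto_add var tendsto_Cesaro_mean)
  then have "(\<lambda>n. (\<Sum>i=1..n. (X i \<omega> - mu_hat X i \<omega>)\<^sup>2) / real n) \<longlonglongrightarrow> s"
    by (simp add: e_def flip: sum.distrib add_divide_distrib)
  then show ?thesis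
  proof (rule Lim_transform_eventually[OF tendsto_regularized_mean])
    show "eventually (\<lambda>t. (1/4 + (\<Sum>i=1..t. (X i \<omega> - mu_hat X i \<omega>)\<^sup>2)) / (real t + 1)
        = sigma2_hat X t \<omega>) sequentially"
      using eventually_gt_at_top[of 0] by eventually_elim (simp add: sigma2_hat_def)
  qed
qed

lemma lam_scaled_tendsto:
  assumes sigma2: "(\<lambda>t. sigma2_hat X t \<omega>) \<longlonglongrightarrow> s" and "s > 0"
  shows "(\<lambda>n. lam \<alpha> X (Suc n) \<omega> * sqrt (real (Suc n) * ln (1 + real (Suc n))))
    \<longlonglongrightarrow> sqrt (2 * ln (2 / \<alpha>) / s)"
proof -
  define c where "c = 2 * ln (2 / \<alpha>)"
  define w where "w n = sqrt (real (Suc n) * ln (1 + real (Suc n)))" for n :: nat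
  have w_pos: "w n > 0" for n
    by (simp add: w_def)
  have uncapped: "(\<lambda>n. sqrt (c / sigma2_hat X n \<omega>)) \<longlonglongrightarrow> sqrt (c / s)"
    using \<open>s > 0\<close> by (intro tendsto_intros sigma2) simp
  have "(\<lambda>n. sqrt (c / sigma2_hat X n \<omega>) * inverse (w n)) \<longlonglongrightarrow> sqrt (c / s) * 0"
    by (intro tendsto_mult uncapped) (unfold w_def, real_asymp)
  from order_tendstoD(2)[OF this, of "1/2"]
  have "eventually (\<lambda>n. sqrt (c / sigma2_hat X n \<omega>) * inverse (w n) < 1/2) sequentially"
    by simp
  then have "eventually (\<lambda>n. sqrt (c / sigma2_hat X n \<omega>) = lam \<alpha> X (Suc n) \<omega> * w n) sequentially"
  proof eventually_elim
    case (elim n)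
    have "lam \<alpha> X (Suc n) \<omega> = min (sqrt (c / sigma2_hat X n \<omega>) / w n) (1/2)"
      by (simp add: lam_def c_def w_def real_sqrt_divide real_sqrt_mult mult.assoc)
    with elim w_pos[of n] show ?case
      by (simp add: field_simps)
  qed
  with uncapped show ?thesis
    unfolding c_def w_def by (rule Lim_transform_eventually)
qed

lemma lam_partial_sum_asymptotic:
  assumes sigma2: "(\<lambda>t. sigma2_hat X t \<omega>) \<longlonglongrightarrow> s" and "s > 0" and "0 < \<alpha>" and "\<alpha> < 2"
  shows "(\<lambda>t::nat. (\<Sum>i=1..t. lam \<alpha> X i \<omega>) /
      (2 * sqrt (2 * ln (2 / \<alpha>) / s) * sqrt (real t / ln (real t)))) \<longlonglongrightarrow> 1"
proof -
  define K where "K = sqrt (2 * ln (2 / \<alpha>) / s)"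
  define g where "g n = sqrt (real n / ln (real n))" for n :: nat
  define w where "w n = sqrt (real (Suc n) * ln (1 + real (Suc n)))" for n :: nat
  have "K > 0"
    using assms by (simp add: K_def)
  have w_pos: "w n > 0" for n
    by (simp add: w_def)
  have increment: "(\<lambda>n. (g (Suc n) - g n) * w n) \<longlonglongrightarrow> 1/2"
    unfolding g_def w_def by real_asymp
  have lam_w: "(\<lambda>n. lam \<alpha> X (Suc n) \<omega> * w n) \<longlonglongrightarrow> K"
    unfolding w_def K_def by (rule lam_scaled_tendsto[OF sigma2 \<open>s > 0\<close>])
  show ?thesis
    unfolding K_def[symmetric] g_def[symmetric]
  proof (rule Stolz_Cesaro)
    have "(\<lambda>n. (lam \<alpha> X (Suc n) \<omega> * w n) / (2 * K * ((g (Suc n) - g n) * w n)))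
        \<longlonglongrightarrow> K / (2 * K * (1/2))"
      by (intro tendsto_intros lam_w increment) (use \<open>K > 0\<close> in simp)
    moreover have "(lam \<alpha> X (Suc n) \<omega> * w n) / (2 * K * ((g (Suc n) - g n) * w n))
        = ((\<Sum>i=1..Suc n. lam \<alpha> X i \<omega>) - (\<Sum>i=1..n. lam \<alpha> X i \<omega>))
          / (2 * K * g (Suc n) - 2 * K * g n)"
      for n
      using w_pos[of n] by (simp add: right_diff_distrib)
    ultimately show "(\<lambda>n. ((\<Sum>i=1..Suc n. lam \<alpha> X i \<omega>) - (\<Sum>i=1..n. lam \<alpha> X i \<omega>))
        / (2 * K * g (Suc n) - 2 * K * g n)) \<longlonglongrightarrow> 1"
      using \<open>K > 0\<close> by simp
    have "eventually (\<lambda>n. (g (Suc n) - g n) * w n > 0) sequentially"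
      using increment by (rule order_tendstoD) simp
    then show "eventually (\<lambda>n. 2 * K * g n < 2 * K * g (Suc n)) sequentially"
    proof eventually_elim
      case (elim n)
      then have "g n < g (Suc n)"
        using w_pos[of n] by (simp add: zero_less_mult_iff)
      then show ?case
        using \<open>K > 0\<close> by simp
    qed
    have "filterlim g at_top sequentially"
      unfolding g_def by real_asymp
    then show "filterlim (\<lambda>n. 2 * K * g n) at_top sequentially"
      by (intro filterlim_tendsto_pos_mult_at_top[OF tendsto_const]) (use \<open>K > 0\<close> in simp)
  qed
qed

theorem mainTheorem15:
  fixes M :: "'a measure" and X :: "nat \<Rightarrow> 'a \<Rightarrow> real" and \<alpha> \<sigma>2 :: real
  assumes "prob_space M"
    and "\<And>i. i \<ge> 1 \<Longrightarrow> X i \<in> borel_measurable M"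
    and "prob_space.indep_vars M (\<lambda>_. borel) X {1..}"
    and "\<And>i. i \<ge> 1 \<Longrightarrow> distr M borel (X i) = distr M borel (X 1)"
    and "\<And>i \<omega>. i \<ge> 1 \<Longrightarrow> \<omega> \<in> space M \<Longrightarrow> X i \<omega> \<in> {0..1}"
    and "integral\<^sup>L M (\<lambda>\<omega>. (X 1 \<omega> - integral\<^sup>L M (X 1))\<^sup>2) = \<sigma>2"
    and "\<sigma>2 > 0"
    and "0 < \<alpha>" and "\<alpha> < 1"
  shows "AE \<omega> in M.
    ((\<lambda>t::nat. (\<Sum>i=1..t. lam \<alpha> X i \<omega>) /
        (2 * sqrt (2 * ln (2 / \<alpha>) / \<sigma>2) * sqrt (real t / ln (real t))))
      \<longlongrightarrow> 1) at_top"
proof -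
  interpret prob_space M by fact
  define \<mu> where "\<mu> = expectation (X 1)"
  define f where "f x = (x - \<mu>)\<^sup>2" for x
  have "\<mu> \<in> {0..1}"
    unfolding \<mu>_def using assms(2,5) by (intro expectation_in_interval) auto
  then have f_bounded: "f (X i \<omega>) \<in> {0..1}" if "i \<ge> 1" "\<omega> \<in> space M" for i \<omega>
    using assms(5)[OF that] by (simp add: f_def abs_square_le_1 abs_le_iff)
  have "AE \<omega> in M. (\<lambda>n. (\<Sum>i=1..n. X i \<omega>) / real n) \<longlonglongrightarrow> \<mu>"
    unfolding \<mu>_def by (rule strong_law_of_large_numbers_bounded_iid[OF assms(2-5)]) simp_all
  moreover have "AE \<omega> in M.
      (\<lambda>n. (\<Sum>i=1..n. f (X i \<omega>)) / real n) \<longlonglongrightarrow> expectation (\<lambda>\<omega>. f (X 1 \<omega>))"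
    by (rule strong_law_of_large_numbers_bounded_iid_transform[of X f, OF assms(2-4) _ f_bounded])
      (unfold f_def, measurable)
  moreover have "AE \<omega> in M. \<omega> \<in> space M"
    by simp
  ultimately show ?thesis
  proof eventually_elim
    case (elim \<omega>)
    have "(\<lambda>t. sigma2_hat X t \<omega>) \<longlonglongrightarrow> \<sigma>2"
      by (rule sigma2_hat_tendsto[of X \<omega> \<mu>, OF _ \<open>\<mu> \<in> {0..1}\<close> elim(1)])
        (use elim assms(5,6) in \<open>simp_all add: f_def \<mu>_def\<close>)
    then show ?case
      by (rule lam_partial_sum_asymptotic) (use assms(7-9) in auto)
  qed
qed

end
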